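(* Let $\mathcal D$ be a distribution of $(x,y)\in\mathbb R^d\times\{-1,+1\}$ with $x$ having finite second moments, let $\lambda>0$, and let $w^*=(w_1^*,\dots,w_d^* )$ be a minimizer of $\mathcal L(w)=\mathbb E_{(x,y)\sim\mathcal D}[\max(0,1-yw^\top x)]+\frac{\lambda}{2}\|w\|_2^2$. Suppose that the coordinates of $x$ are mutually independent conditionally on $y$. If a coordinate $i$ satisfies $\mathbb E[x_i\mid y=-1]\le 0\le \mathbb E[x_i\mid y=1]$, then $w_i^*\ge 0$. If instead $\mathbb E[x_i\mid y=1]\le 0\le \mathbb E[x_i\mid y=-1]$, then $w_i^*\le 0$. *)

theory Defs
  imports "HOL-Probability.Probability"
begin

text \<open>The data distribution D is the joint law of a random pair (X, Y) on a
probability space M, with X valued in R^d (here real^'d) and Y in {-1,+1}.\<close>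

definition cond_event :: "'w measure \<Rightarrow> ('w \<Rightarrow> real) \<Rightarrow> real \<Rightarrow> 'w set" where
  "cond_event M Y c = {\<omega> \<in> space M. Y \<omega> = c}"

definition cond_exp_given :: "'w measure \<Rightarrow> ('w \<Rightarrow> real) \<Rightarrow> real \<Rightarrow> ('w \<Rightarrow> real) \<Rightarrow> real" where
  "cond_exp_given M Y c f = integral\<^sup>L (uniform_measure M (cond_event M Y c)) f"

definition hinge_objective ::
  "'w measure \<Rightarrow> ('w \<Rightarrow> real^'d) \<Rightarrow> ('w \<Rightarrow> real) \<Rightarrow> real \<Rightarrow> real^'d \<Rightarrow> real" where
  "hinge_objective M X Y lam w =
     integral\<^sup>L M (\<lambda>\<omega>. max 0 (1 - Y \<omega> * (w \<bullet> X \<omega>))) + lam / 2 * (norm w)^2"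

end

theory Submission
  imports Defs
begin

(* Write the minimizer as w = v + t e_i with v_i = 0. Comparing L(w) with L(v) through the
   subgradient inequality of the hinge loss at v gives  lam/2 t^2 <= t E[y x_i 1{y v.x < 1}].
   Conditionally on y = c, the coordinate x_i is independent of v.x, so this expectation splits as
   P(y=1) P(v.x < 1 | y=1) E[x_i | y=1] - P(y=-1) P(-v.x < 1 | y=-1) E[x_i | y=-1],
   whose sign is fixed by either hypothesis on the conditional means; t must share that sign. *)

lemma
  fixes f :: "'a \<Rightarrow> real"
  assumes M: "finite_measure M" and A[measurable]: "A \<in> sets M" and pos: "measure M A > 0"
  shows integral_uniform_measure:
      "f \<in> borel_measurable M \<Longrightarrow>
       integral\<^sup>L (uniform_measure M A) f = integral\<^sup>L M (\<lambda>x. indicator A x * f x) / measure M A"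
    and integrable_uniform_measure:
      "integrable M f \<Longrightarrow> integrable (uniform_measure M A) f"
proof -
  have "emeasure M A = ennreal (measure M A)"
    using finite_measure.emeasure_eq_measure[OF M] by simp
  then have density_eq:
    "uniform_measure M A = density M (\<lambda>x. ennreal (indicator A x / measure M A))"
    unfolding uniform_measure_def
    by (intro arg_cong[where f="density M"] ext)
       (use pos in \<open>auto simp: divide_ennreal[symmetric] indicator_def\<close>)
  have scale: "(\<lambda>x. (indicator A x / measure M A) *\<^sub>R f x) = (\<lambda>x. indicator A x * f x / measure M A)"
    by auto
  show "integral\<^sup>L (uniform_measure M A) f = integral\<^sup>L M (\<lambda>x. indicator A x * f x) / measure M A"
    if [measurable]: "f \<in> borel_measurable M"
    unfolding density_eq using pos by (subst integral_density) (auto simp: scale)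
  show "integrable M f \<Longrightarrow> integrable (uniform_measure M A) f"
    unfolding density_eq using pos
    by (subst integrable_density)
       (auto simp: scale intro!: integrable_mult_indicator[OF A, where f=f, unfolded real_scaleR_def])
qed

lemma sets_cond_event [measurable]: "Y \<in> borel_measurable M \<Longrightarrow> cond_event M Y c \<in> sets M"
  unfolding cond_event_def by measurable

lemma integral_indicator_cond_event:
  fixes f :: "'a \<Rightarrow> real"
  assumes "finite_measure M" "Y \<in> borel_measurable M" "measure M (cond_event M Y c) > 0"
    and "f \<in> borel_measurable M"
  shows "integral\<^sup>L M (\<lambda>\<omega>. indicator (cond_event M Y c) \<omega> * f \<omega>) =
         measure M (cond_event M Y c) * cond_exp_given M Y c f"
  using integral_uniform_measure[OF assms(1) sets_cond_event[OF assms(2)] assms(3,4)] assms(3)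
  by (simp add: cond_exp_given_def)

lemma integral_binary_label:
  fixes f :: "real \<Rightarrow> 'a \<Rightarrow> real"
  assumes M: "finite_measure M" and Y[measurable]: "Y \<in> borel_measurable M"
    and labels: "\<And>\<omega>. \<omega> \<in> space M \<Longrightarrow> Y \<omega> \<in> {-1, 1}"
    and pos: "measure M (cond_event M Y 1) > 0" "measure M (cond_event M Y (-1)) > 0"
    and int: "integrable M (f 1)" "integrable M (f (-1))"
  shows "integral\<^sup>L M (\<lambda>\<omega>. Y \<omega> * f (Y \<omega>) \<omega>) =
           measure M (cond_event M Y 1) * cond_exp_given M Y 1 (f 1)
         - measure M (cond_event M Y (-1)) * cond_exp_given M Y (-1) (f (-1))"
proof -
  let ?part = "\<lambda>c \<omega>. indicator (cond_event M Y c) \<omega> * f c \<omega>"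
  have part_int: "integrable M (?part c)" if "integrable M (f c)" for c
    using integrable_mult_indicator[OF sets_cond_event[OF Y] that] by simp
  have "integral\<^sup>L M (\<lambda>\<omega>. Y \<omega> * f (Y \<omega>) \<omega>) = integral\<^sup>L M (\<lambda>\<omega>. ?part 1 \<omega> - ?part (-1) \<omega>)"
    by (rule Bochner_Integration.integral_cong[OF refl])
       (use labels in \<open>force simp: cond_event_def indicator_def\<close>)
  also have "\<dots> = integral\<^sup>L M (?part 1) - integral\<^sup>L M (?part (-1))"
    using int by (intro Bochner_Integration.integral_diff part_int)
  finally show ?thesis
    using int pos by (simp add: integral_indicator_cond_event[OF M Y])
qed

lemma hinge_subgradient:
  fixes a b :: real
  shows "max 0 (1 - a) - b * of_bool (a < 1) \<le> max 0 (1 - (a + b))"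
  by auto

lemma integrable_hinge_loss:
  fixes X :: "'a \<Rightarrow> 'v::euclidean_space"
  assumes "finite_measure M" and [measurable]: "X \<in> borel_measurable M" "Y \<in> borel_measurable M"
    and Y_bound: "\<And>\<omega>. \<omega> \<in> space M \<Longrightarrow> \<bar>Y \<omega>\<bar> \<le> 1"
    and "integrable M (\<lambda>\<omega>. norm (X \<omega>))"
  shows "integrable M (\<lambda>\<omega>. max 0 (1 - Y \<omega> * (w \<bullet> X \<omega>)))"
proof (rule Bochner_Integration.integrable_bound)
  show "integrable M (\<lambda>\<omega>. 1 + norm w * norm (X \<omega>))"
    using assms(1,5) by (simp add: finite_measure.integrable_const)
  have "\<bar>Y \<omega> * (w \<bullet> X \<omega>)\<bar> \<le> norm w * norm (X \<omega>)" if "\<omega> \<in> space M" for \<omega>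
    using mult_mono[OF Y_bound[OF that] Cauchy_Schwarz_ineq2[of w "X \<omega>"]]
    by (simp add: abs_mult)
  then show "AE \<omega> in M. norm (max 0 (1 - Y \<omega> * (w \<bullet> X \<omega>))) \<le> norm (1 + norm w * norm (X \<omega>))"
    by (intro AE_I2) (auto simp: abs_le_iff)
qed measurable

lemma hinge_objective_direction_bound:
  fixes X :: "'a \<Rightarrow> real^'d" and v b :: "real^'d"
  assumes M: "finite_measure M" and [measurable]: "X \<in> borel_measurable M" "Y \<in> borel_measurable M"
    and Y_bound: "\<And>\<omega>. \<omega> \<in> space M \<Longrightarrow> \<bar>Y \<omega>\<bar> \<le> 1"
    and X_int: "integrable M (\<lambda>\<omega>. norm (X \<omega>))"
    and orth: "orthogonal v b" and unit: "norm b = 1"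
    and le: "hinge_objective M X Y lam (v + t *\<^sub>R b) \<le> hinge_objective M X Y lam v"
  shows "lam / 2 * t\<^sup>2 \<le> t * integral\<^sup>L M (\<lambda>\<omega>. Y \<omega> * ((b \<bullet> X \<omega>) * of_bool (Y \<omega> * (v \<bullet> X \<omega>) < 1)))"
    (is "_ \<le> t * integral\<^sup>L M ?G")
proof -
  let ?h = "\<lambda>w \<omega>. max 0 (1 - Y \<omega> * (w \<bullet> X \<omega>))"
  have h_int: "integrable M (?h w)" for w
    by (rule integrable_hinge_loss[OF M _ _ Y_bound X_int]) simp_all
  have G_int: "integrable M ?G"
  proof (rule Bochner_Integration.integrable_bound[OF X_int])
    have "\<bar>?G \<omega>\<bar> \<le> norm (X \<omega>)" if "\<omega> \<in> space M" for \<omega>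
      using mult_mono[OF Y_bound[OF that] Cauchy_Schwarz_ineq2[of b "X \<omega>"]] unit
      by (simp add: abs_mult)
    then show "AE \<omega> in M. norm (?G \<omega>) \<le> norm (norm (X \<omega>))"
      by (intro AE_I2) simp
  qed measurable
  have "?h v \<omega> - t * ?G \<omega> \<le> ?h (v + t *\<^sub>R b) \<omega>" for \<omega>
    using hinge_subgradient[of "Y \<omega> * (v \<bullet> X \<omega>)" "t * (Y \<omega> * (b \<bullet> X \<omega>))"]
    by (simp add: algebra_simps)
  then have "integral\<^sup>L M (\<lambda>\<omega>. ?h v \<omega> - t * ?G \<omega>) \<le> integral\<^sup>L M (?h (v + t *\<^sub>R b))"
    using h_int G_int by (intro integral_mono) auto
  then have hinge_le: "integral\<^sup>L M (?h v) - t * integral\<^sup>L M ?G \<le> integral\<^sup>L M (?h (v + t *\<^sub>R b))"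
    using h_int G_int by simp
  have "(norm (v + t *\<^sub>R b))\<^sup>2 = (norm v)\<^sup>2 + t\<^sup>2"
    using norm_add_Pythagorean[OF orthogonal_clauses(2)[OF orth]] unit by simp
  with le hinge_le show ?thesis
    by (simp add: hinge_objective_def algebra_simps)
qed

lemma (in prob_space) indep_var_component_inner:
  fixes X :: "'a \<Rightarrow> real^'d"
  assumes indep: "indep_vars (\<lambda>_. borel) (\<lambda>j \<omega>. X \<omega> $ j) UNIV" and "v $ i = 0"
  shows "indep_var borel (\<lambda>\<omega>. X \<omega> $ i) borel (\<lambda>\<omega>. v \<bullet> X \<omega>)"
proof -
  let ?Z = "\<lambda>j \<omega>. if j = i then X \<omega> $ j else v $ j * X \<omega> $ j"
  have "indep_vars (\<lambda>_. borel) ?Z (insert i (UNIV - {i}))"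
    using indep_vars_compose2[OF indep, of "\<lambda>j x. if j = i then x else v $ j * x" "\<lambda>_. borel"]
    by (simp add: insert_absorb)
  from indep_vars_sum[OF _ _ this] have "indep_var borel (?Z i) borel (\<lambda>\<omega>. \<Sum>j\<in>UNIV - {i}. ?Z j \<omega>)"
    by simp
  moreover have "(\<Sum>j\<in>UNIV - {i}. v $ j * X \<omega> $ j) = v \<bullet> X \<omega>" for \<omega>
    using sum.remove[of UNIV i "\<lambda>j. v $ j * X \<omega> $ j"] \<open>v $ i = 0\<close>
    by (simp add: inner_vec_def)
  ultimately show ?thesis
    by simp
qed

lemma cond_exp_given_component_mult_indep:
  fixes X :: "'a \<Rightarrow> real^'d" and S :: "real set"
  assumes M: "prob_space M" and [measurable]: "X \<in> borel_measurable M" "Y \<in> borel_measurable M"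
    and pos: "measure M (cond_event M Y c) > 0"
    and X_int: "integrable M (\<lambda>\<omega>. X \<omega> $ i)"
    and indep: "prob_space.indep_vars (uniform_measure M (cond_event M Y c))
                  (\<lambda>j. borel) (\<lambda>j \<omega>. X \<omega> $ j) UNIV"
    and "v $ i = 0" and [measurable]: "S \<in> sets borel"
  shows "cond_exp_given M Y c (\<lambda>\<omega>. X \<omega> $ i * indicator S (v \<bullet> X \<omega>)) =
         cond_exp_given M Y c (\<lambda>\<omega>. indicator S (v \<bullet> X \<omega>)) * cond_exp_given M Y c (\<lambda>\<omega>. X \<omega> $ i)"
proof -
  let ?N = "uniform_measure M (cond_event M Y c)"
  interpret M: prob_space M by fact
  interpret N: prob_space ?N
    using pos by (intro prob_space_uniform_measure) (simp_all add: M.emeasure_eq_measure)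
  have "N.indep_var borel (\<lambda>\<omega>. X \<omega> $ i) borel (indicator S \<circ> (\<lambda>\<omega>. v \<bullet> X \<omega>))"
    using N.indep_var_compose[OF N.indep_var_component_inner[OF indep \<open>v $ i = 0\<close>], of id]
    by simp
  moreover have "integrable ?N (\<lambda>\<omega>. X \<omega> $ i)"
    using pos by (intro integrable_uniform_measure[OF M.finite_measure_axioms _ _ X_int]) simp_all
  moreover have "integrable ?N (\<lambda>\<omega>. indicator S (v \<bullet> X \<omega>) :: real)"
    by (rule N.integrable_const_bound[where B=1]) (simp_all add: indicator_def)
  ultimately show ?thesis
    unfolding cond_exp_given_def by (simp add: N.indep_var_lebesgue_integral comp_def mult.commute)
qed

lemma hinge_minimizer_coordinate_bound:
  fixes X :: "'a \<Rightarrow> real^'d" and w :: "real^'d"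
  assumes "finite_measure M" and "X \<in> borel_measurable M" "Y \<in> borel_measurable M"
    and "\<And>\<omega>. \<omega> \<in> space M \<Longrightarrow> \<bar>Y \<omega>\<bar> \<le> 1"
    and "integrable M (\<lambda>\<omega>. norm (X \<omega>))"
    and le: "hinge_objective M X Y lam w \<le> hinge_objective M X Y lam (w - w $ i *\<^sub>R axis i 1)"
  shows "lam / 2 * (w $ i)\<^sup>2 \<le> w $ i * integral\<^sup>L M (\<lambda>\<omega>. Y \<omega> *
           (X \<omega> $ i * of_bool (Y \<omega> * ((w - w $ i *\<^sub>R axis i 1) \<bullet> X \<omega>) < 1)))"
proof -
  let ?v = "w - w $ i *\<^sub>R axis i 1"
  have "lam / 2 * (w $ i)\<^sup>2 \<le>
      w $ i * integral\<^sup>L M (\<lambda>\<omega>. Y \<omega> * ((axis i 1 \<bullet> X \<omega>) * of_bool (Y \<omega> * (?v \<bullet> X \<omega>) < 1)))"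
    by (rule hinge_objective_direction_bound[OF assms(1-5)])
       (use le in \<open>simp_all add: orthogonal_def inner_axis\<close>)
  then show ?thesis
    by (simp add: inner_axis')
qed

lemma hinge_subgradient_integral_cond_means:
  fixes X :: "'a \<Rightarrow> real^'d"
  assumes M: "prob_space M" and X[measurable]: "X \<in> borel_measurable M"
    and Y[measurable]: "Y \<in> borel_measurable M"
    and labels: "\<And>\<omega>. \<omega> \<in> space M \<Longrightarrow> Y \<omega> \<in> {-1, 1}"
    and pos: "measure M (cond_event M Y 1) > 0" "measure M (cond_event M Y (-1)) > 0"
    and X_int: "integrable M (\<lambda>\<omega>. norm (X \<omega>))"
    and indep: "\<And>c. c \<in> {-1, 1} \<Longrightarrow>
           prob_space.indep_vars (uniform_measure M (cond_event M Y c))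
             (\<lambda>j. borel) (\<lambda>j \<omega>. X \<omega> $ j) UNIV"
    and v_i: "v $ i = 0"
  shows "\<exists>a b. 0 \<le> a \<and> 0 \<le> b \<and>
           integral\<^sup>L M (\<lambda>\<omega>. Y \<omega> * (X \<omega> $ i * of_bool (Y \<omega> * (v \<bullet> X \<omega>) < 1))) =
           a * cond_exp_given M Y 1 (\<lambda>\<omega>. X \<omega> $ i) - b * cond_exp_given M Y (-1) (\<lambda>\<omega>. X \<omega> $ i)"
proof -
  interpret prob_space M by fact
  define f :: "real \<Rightarrow> 'a \<Rightarrow> real"
    where "f c \<omega> = X \<omega> $ i * indicator {s. c * s < 1} (v \<bullet> X \<omega>)" for c \<omega>
  define weight where "weight c = measure M (cond_event M Y c) *
      cond_exp_given M Y c (\<lambda>\<omega>. indicator {s. c * s < 1} (v \<bullet> X \<omega>))" for c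
  have X_i[measurable]: "(\<lambda>\<omega>. X \<omega> $ i) \<in> borel_measurable M"
    by (rule measurable_compose[OF X borel_measurable_nth])
  have X_i_int: "integrable M (\<lambda>\<omega>. X \<omega> $ i)"
    by (rule Bochner_Integration.integrable_bound[OF X_int]) (simp_all add: component_le_norm_cart)
  have f_int: "integrable M (f c)" for c
    unfolding f_def
    by (rule Bochner_Integration.integrable_bound[OF X_i_int]) (auto simp: indicator_def)
  have factor: "cond_exp_given M Y c (f c) =
      cond_exp_given M Y c (\<lambda>\<omega>. indicator {s. c * s < 1} (v \<bullet> X \<omega>)) *
      cond_exp_given M Y c (\<lambda>\<omega>. X \<omega> $ i)"
    if "c \<in> {-1, 1}" for c
    unfolding f_def
    by (rule cond_exp_given_component_mult_indep[OF M X Y _ X_i_int indep[OF that] v_i])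
       (use pos that in auto)
  have weight_nonneg: "weight c \<ge> 0" if "c \<in> {-1, 1}" for c
    unfolding weight_def cond_exp_given_def using pos that
    by (auto intro!: mult_nonneg_nonneg Bochner_Integration.integral_nonneg)
  have "integral\<^sup>L M (\<lambda>\<omega>. Y \<omega> * (X \<omega> $ i * of_bool (Y \<omega> * (v \<bullet> X \<omega>) < 1))) =
      measure M (cond_event M Y 1) * cond_exp_given M Y 1 (f 1)
    - measure M (cond_event M Y (-1)) * cond_exp_given M Y (-1) (f (-1))"
    using integral_binary_label[OF finite_measure_axioms Y labels pos f_int[of 1] f_int[of "-1"]]
    by (simp add: f_def[abs_def] indicator_def)
  also have "\<dots> = weight 1 * cond_exp_given M Y 1 (\<lambda>\<omega>. X \<omega> $ i)
    - weight (-1) * cond_exp_given M Y (-1) (\<lambda>\<omega>. X \<omega> $ i)"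
    by (simp add: factor weight_def)
  finally show ?thesis
    using weight_nonneg[of 1] weight_nonneg[of "-1"] by blast
qed

lemma sign_of_quadratic_bound:
  fixes lam t T :: real
  assumes "lam > 0" and "lam / 2 * t\<^sup>2 \<le> t * T"
  shows "(0 \<le> T \<longrightarrow> 0 \<le> t) \<and> (T \<le> 0 \<longrightarrow> t \<le> 0)"
proof -
  have "t \<noteq> 0 \<Longrightarrow> 0 < lam / 2 * t\<^sup>2"
    using assms(1) by simp
  then have "t \<noteq> 0 \<Longrightarrow> 0 < t * T"
    using assms(2) by linarith
  then show ?thesis
    by (cases "t = 0") (auto simp: zero_less_mult_iff)
qed

theorem mainTheorem1:
  fixes M :: "'w measure" and X :: "'w \<Rightarrow> real^'d" and Y :: "'w \<Rightarrow> real"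
    and lam :: real and wstar :: "real^'d" and i :: 'd
  assumes M: "prob_space M"
    and X: "X \<in> borel_measurable M" and Y: "Y \<in> borel_measurable M"
    and labels: "\<And>\<omega>. \<omega> \<in> space M \<Longrightarrow> Y \<omega> \<in> {-1, 1}"
    and pos: "measure M (cond_event M Y 1) > 0" "measure M (cond_event M Y (-1)) > 0"
    and X_sq_int: "integrable M (\<lambda>\<omega>. (norm (X \<omega>))^2)"
    and lam: "lam > 0"
    and minimizer: "\<And>w. hinge_objective M X Y lam wstar \<le> hinge_objective M X Y lam w"
    and indep: "\<And>c. c \<in> {-1, 1} \<Longrightarrow>
           prob_space.indep_vars (uniform_measure M (cond_event M Y c))
             (\<lambda>j. borel) (\<lambda>j \<omega>. X \<omega> $ j) UNIV"
  shows "(cond_exp_given M Y (-1) (\<lambda>\<omega>. X \<omega> $ i) \<le> 0 \<and>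
          0 \<le> cond_exp_given M Y 1 (\<lambda>\<omega>. X \<omega> $ i) \<longrightarrow> wstar $ i \<ge> 0)
       \<and> (cond_exp_given M Y 1 (\<lambda>\<omega>. X \<omega> $ i) \<le> 0 \<and>
          0 \<le> cond_exp_given M Y (-1) (\<lambda>\<omega>. X \<omega> $ i) \<longrightarrow> wstar $ i \<le> 0)"
proof -
  interpret prob_space M by fact
  define v where "v = wstar - wstar $ i *\<^sub>R axis i 1"
  let ?m = "\<lambda>c. cond_exp_given M Y c (\<lambda>\<omega>. X \<omega> $ i)"
  have X_int: "integrable M (\<lambda>\<omega>. norm (X \<omega>))"
    using X by (intro square_integrable_imp_integrable[OF _ X_sq_int]) simp
  have "\<bar>Y \<omega>\<bar> \<le> 1" if "\<omega> \<in> space M" for \<omega>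
    using labels[OF that] by auto
  from hinge_minimizer_coordinate_bound[OF finite_measure_axioms X Y this X_int minimizer]
  have bound: "lam / 2 * (wstar $ i)\<^sup>2 \<le>
      wstar $ i * integral\<^sup>L M (\<lambda>\<omega>. Y \<omega> * (X \<omega> $ i * of_bool (Y \<omega> * (v \<bullet> X \<omega>) < 1)))"
    unfolding v_def .
  have "v $ i = 0"
    by (simp add: v_def)
  from hinge_subgradient_integral_cond_means[OF M X Y labels pos X_int indep this]
  obtain a b where "0 \<le> a" "0 \<le> b" and integral_eq:
      "integral\<^sup>L M (\<lambda>\<omega>. Y \<omega> * (X \<omega> $ i * of_bool (Y \<omega> * (v \<bullet> X \<omega>) < 1))) =
       a * ?m 1 - b * ?m (-1)"
    by blast
  have "0 \<le> a * ?m 1 - b * ?m (-1)" if "?m (-1) \<le> 0" "0 \<le> ?m 1"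
    using \<open>0 \<le> a\<close> \<open>0 \<le> b\<close> that by (smt (verit) mult_nonneg_nonneg mult_nonneg_nonpos)
  moreover have "a * ?m 1 - b * ?m (-1) \<le> 0" if "?m 1 \<le> 0" "0 \<le> ?m (-1)"
    using \<open>0 \<le> a\<close> \<open>0 \<le> b\<close> that by (smt (verit) mult_nonneg_nonneg mult_nonneg_nonpos)
  ultimately show ?thesis
    using sign_of_quadratic_bound[OF lam bound[unfolded integral_eq]] by blast
qed

end
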